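(* Let $(x_n)\in\ell_1$ and let $I$ be a maximal ideal on $\mathbb{N}$. If $A(x_n)$ is nonmeager in $\mathbb{R}$, then $A_I(x_n)$ is nonmeager. If $\lambda^{*}(A(x_n))>0$ and $A_I(x_n)$ is Lebesgue measurable, then $\lambda^{*}(A_I(x_n))>0$, where $\lambda^{*}$ is Lebesgue outer measure.
   Context: An ideal on $\mathbb{N}$ is a family $I\subseteq P(\mathbb{N})$ closed under finite unions and subsets with $\mathbb{N}\notin I$; it is maximal if for every $A\subseteq\mathbb{N}$ either $A\in I$ or $\mathbb{N}\setminus A\in I$. $A(x_n)=\{\sum_{n\in A}x_n : A\subseteq\mathbb{N}\}$, $A_I(x_n)=\{\sum_{n\in A}x_n : A\in I\}$. *)

theory Defs
  imports "HOL-Analysis.Analysis"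
begin

definition ideal_on_nat :: "nat set set \<Rightarrow> bool" where
  "ideal_on_nat I \<longleftrightarrow>
     (\<forall>A\<in>I. \<forall>B\<in>I. A \<union> B \<in> I) \<and>
     (\<forall>A\<in>I. \<forall>B. B \<subseteq> A \<longrightarrow> B \<in> I) \<and>
     UNIV \<notin> I"

definition maximal_ideal_on_nat :: "nat set set \<Rightarrow> bool" where
  "maximal_ideal_on_nat I \<longleftrightarrow> ideal_on_nat I \<and> (\<forall>A. A \<in> I \<or> - A \<in> I)"

definition subsums :: "(nat \<Rightarrow> real) \<Rightarrow> real set" where
  "subsums x = {infsum x A | A. True}"

definition subsums_ideal :: "nat set set \<Rightarrow> (nat \<Rightarrow> real) \<Rightarrow> real set" where
  "subsums_ideal I x = {infsum x A | A. A \<in> I}"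

definition nowhere_dense :: "'a::topological_space set \<Rightarrow> bool" where
  "nowhere_dense S \<longleftrightarrow> interior (closure S) = {}"

definition meager :: "'a::topological_space set \<Rightarrow> bool" where
  "meager S \<longleftrightarrow> (\<exists>F :: nat \<Rightarrow> 'a set. (\<forall>n. nowhere_dense (F n)) \<and> S \<subseteq> (\<Union>n. F n))"

end

theory Submission
  imports Defs
begin

text \<open>
  Write \<open>S\<close> for the total sum of \<open>x\<close>. For every \<open>A \<subseteq> \<nat>\<close> the ideal contains
  \<open>A\<close> or its complement, and the subsum over \<open>A\<close> equals \<open>S\<close> minus the subsum over the
  complement. Hence \<open>A(x\<^sub>n)\<close> is covered by \<open>A\<^sub>I(x\<^sub>n)\<close> together with its reflection
  \<open>t \<mapsto> S - t\<close>. The reflection is a homeomorphism of \<open>\<real>\<close> preserving Lebesgue null sets,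
  so if \<open>A\<^sub>I(x\<^sub>n)\<close> were meager (resp. a measurable null set), so would be \<open>A(x\<^sub>n)\<close>.
\<close>

lemma infsum_add_Compl:
  fixes x :: "'a \<Rightarrow> 'b::banach"
  assumes "x summable_on UNIV"
  shows "infsum x A + infsum x (- A) = infsum x UNIV"
proof -
  have "x summable_on B" for B
    using summable_on_subset_banach[OF assms] by blast
  then show ?thesis
    using infsum_Un_disjoint[of x A "- A"] by simp
qed

lemma subsums_subset_reflected_subsums_ideal:
  fixes x :: "nat \<Rightarrow> real"
  assumes "x summable_on UNIV" and "\<And>A. A \<in> I \<or> - A \<in> I"
  shows "subsums x \<subseteq> subsums_ideal I x \<union> (\<lambda>t. infsum x UNIV - t) ` subsums_ideal I x"
proof
  fix y assume "y \<in> subsums x"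
  then obtain A where y: "y = infsum x A" by (auto simp: subsums_def)
  show "y \<in> subsums_ideal I x \<union> (\<lambda>t. infsum x UNIV - t) ` subsums_ideal I x"
    using assms(2)[of A]
  proof
    assume "A \<in> I"
    then show ?thesis using y by (auto simp: subsums_ideal_def)
  next
    assume "- A \<in> I"
    then have "infsum x (- A) \<in> subsums_ideal I x" by (auto simp: subsums_ideal_def)
    moreover have "y = infsum x UNIV - infsum x (- A)"
      using y infsum_add_Compl[OF assms(1), of A] by simp
    ultimately show ?thesis by blast
  qed
qed

lemma nowhere_dense_homeomorphic_image:
  assumes "homeomorphic_map euclidean euclidean f" and "nowhere_dense S"
  shows "nowhere_dense (f ` S)"
  using assms homeomorphic_map_closure_of[OF assms(1), of S]
    homeomorphic_map_interior_of[OF assms(1), of "closure S"]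
  by (simp add: nowhere_dense_def)

lemma meagerI:
  fixes F :: "nat \<Rightarrow> 'a::topological_space set"
  assumes "\<And>n. nowhere_dense (F n)" and "S \<subseteq> (\<Union>n. F n)"
  shows "meager S"
  unfolding meager_def by (rule exI[of _ F]) (use assms in blast)

lemma meagerE:
  assumes "meager S"
  obtains F :: "nat \<Rightarrow> 'a::topological_space set"
  where "\<And>n. nowhere_dense (F n)" and "S \<subseteq> (\<Union>n. F n)"
  using assms unfolding meager_def by blast

lemma meager_subset: "meager T \<Longrightarrow> S \<subseteq> T \<Longrightarrow> meager S"
  by (erule meagerE) (rule meagerI, auto)

lemma meager_homeomorphic_image:
  assumes "homeomorphic_map euclidean euclidean f" and "meager S"
  shows "meager (f ` S)"
proof -
  obtain F where F: "\<And>n. nowhere_dense (F n)" "S \<subseteq> (\<Union>n::nat. F n)"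
    using assms(2) by (elim meagerE) blast
  show ?thesis
  proof (rule meagerI)
    show "nowhere_dense (f ` F n)" for n
      using nowhere_dense_homeomorphic_image[OF assms(1) F(1)] .
    show "f ` S \<subseteq> (\<Union>n. f ` F n)"
      using F(2) by blast
  qed
qed

lemma meager_Un:
  assumes "meager S" and "meager T"
  shows "meager (S \<union> T)"
proof -
  obtain F where F: "\<And>n. nowhere_dense (F n)" "S \<subseteq> (\<Union>n::nat. F n)"
    using assms(1) by (elim meagerE) blast
  obtain G where G: "\<And>n. nowhere_dense (G n)" "T \<subseteq> (\<Union>n::nat. G n)"
    using assms(2) by (elim meagerE) blast
  define H where "H n = (if even n then F (n div 2) else G (n div 2))" for n
  have "F n \<subseteq> (\<Union>m. H m)" "G n \<subseteq> (\<Union>m. H m)" for n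
    using UN_upper[of "2 * n" UNIV H] UN_upper[of "2 * n + 1" UNIV H] by (simp_all add: H_def)
  then have "(\<Union>n. F n) \<subseteq> (\<Union>m. H m)" "(\<Union>n. G n) \<subseteq> (\<Union>m. H m)"
    by (simp_all add: UN_subset_iff)
  then have "S \<union> T \<subseteq> (\<Union>n. H n)"
    using F(2) G(2) by (meson Un_least order_trans)
  moreover have "nowhere_dense (H n)" for n
    by (simp add: H_def F(1) G(1))
  ultimately show ?thesis
    by (intro meagerI[of H])
qed

lemma homeomorphic_map_reflection:
  "homeomorphic_map euclidean euclidean (\<lambda>t::'a::real_normed_vector. c - t)"
  by (rule homeomorphic_map_involution) (auto intro!: continuous_intros)

lemma negligible_reflection:
  fixes S :: "'a::euclidean_space set"
  assumes "negligible S"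
  shows "negligible ((\<lambda>t. c - t) ` S)"
proof -
  have "(\<lambda>t. c - t) differentiable_on S"
    by (intro derivative_intros)
  then show ?thesis
    using negligible_differentiable_image_negligible[OF order_refl assms] by blast
qed

lemma outer_measure_of_lebesgue_eq_0_iff_negligible:
  "S \<in> sets lebesgue \<Longrightarrow> outer_measure_of lebesgue S = 0 \<longleftrightarrow> negligible S"
  by (metis outer_measure_of_eq negligible_iff_emeasure0)

theorem mainTheorem16:
  fixes x :: "nat \<Rightarrow> real" and I :: "nat set set"
  assumes l1: "summable (\<lambda>n. \<bar>x n\<bar>)"
    and max: "maximal_ideal_on_nat I"
  shows "(\<not> meager (subsums x) \<longrightarrow> \<not> meager (subsums_ideal I x))
       \<and> ((outer_measure_of lebesgue (subsums x) > 0 \<and> subsums_ideal I x \<in> sets lebesgue)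
           \<longrightarrow> outer_measure_of lebesgue (subsums_ideal I x) > 0)"
proof -
  define B where "B = subsums_ideal I x"
  define \<phi> where "\<phi> = (\<lambda>t::real. infsum x UNIV - t)"
  have "x summable_on UNIV"
    using l1 norm_summable_imp_summable_on[of x] by simp
  moreover have "A \<in> I \<or> - A \<in> I" for A
    using max by (simp add: maximal_ideal_on_nat_def)
  ultimately have cover: "subsums x \<subseteq> B \<union> \<phi> ` B"
    unfolding B_def \<phi>_def by (rule subsums_subset_reflected_subsums_ideal)
  have \<phi>_homeo: "homeomorphic_map euclidean euclidean \<phi>"
    unfolding \<phi>_def by (rule homeomorphic_map_reflection)
  have meager: "meager (subsums x)" if "meager B"
    using meager_subset[OF meager_Un[OF that meager_homeomorphic_image[OF \<phi>_homeo that]] cover] .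
  have null: "outer_measure_of lebesgue (subsums x) = 0"
    if "B \<in> sets lebesgue" and "outer_measure_of lebesgue B = 0"
  proof -
    have "negligible B"
      using outer_measure_of_lebesgue_eq_0_iff_negligible that by blast
    then have "negligible (B \<union> \<phi> ` B)"
      unfolding \<phi>_def by (intro negligible_Un negligible_reflection)
    then have "negligible (subsums x)"
      using cover by (rule negligible_subset)
    then show ?thesis
      using negligible_imp_sets outer_measure_of_lebesgue_eq_0_iff_negligible by blast
  qed
  show ?thesis
  proof (intro conjI impI)
    show "\<not> meager (subsums_ideal I x)" if "\<not> meager (subsums x)"
      using meager that unfolding B_def by blast
    show "outer_measure_of lebesgue (subsums_ideal I x) > 0"
      if "outer_measure_of lebesgue (subsums x) > 0 \<and> subsums_ideal I x \<in> sets lebesgue"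
      using null that not_gr_zero unfolding B_def by metis
  qed
qed

end
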